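(* Let $\mathcal{X}=\langle\mathsf{S},\mathsf{po},\mathsf{rf}\rangle$ be a $\textsf{VSC-read}$ instance and let $\langle\mathcal{X}',\mathsf{cap}',\mathsf{rf}'\rangle$ be the $\textsf{VCh-rf}$ instance constructed from it as described below. Then $\mathcal{X}$ is sequentially consistent if and only if $\langle\mathcal{X}',\mathsf{cap}',\mathsf{rf}'\rangle$ is consistent.
   Context: Channels and events. Each channel $\mathtt{ch}$ has a capacity $\mathsf{cap}(\mathtt{ch})\in\mathbb{N}$; $\mathtt{ch}$ is synchronous if $\mathsf{cap}(\mathtt{ch})=0$ and asynchronous otherwise. An event is a tuple $e=\langle id,\tau,\mathsf{op}(\mathtt{ch},\mathsf{val})\rangle$ with a unique identifier $id$, a thread $\tau$, an operation $\mathsf{op}\in\{\mathtt{snd},\mathtt{rcv}\}$, a channel $\mathtt{ch}$ and a value $\mathsf{val}$. An execution is a finite sequence $\sigma$ of distinct events. $\sigma$ is well-formed (w.r.t. $\mathsf{cap}$) if: (i) for every asynchronous $\mathtt{ch}$ and every prefix $\pi$ of $\sigma$, $R_\pi(\mathtt{ch})\le S_\pi(\mathtt{ch})\le R_\pi(\mathtt{ch})+\mathsf{cap}(\mathtt{ch})$, where $S_\pi(\mathtt{ch})$, $R_\pi(\mathtt{ch})$ are the numbers of send, resp. receive, events on $\mathtt{ch}$ in $\pi$; (ii) for every synchronous $\mathtt{ch}$, every send on $\mathtt{ch}$ is immediately followed in $\sigma$ by a receive on $\mathtt{ch}$ of a different thread, and every receive on $\mathtt{ch}$ is immediately preceded in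 $\sigma$ by a send on $\mathtt{ch}$ of a different thread; (iii) for every channel $\mathtt{ch}$ and every $i$, if $\sigma$ contains an $i$-th receive on $\mathtt{ch}$, then the $i$-th send on $\mathtt{ch}$ has the same value as it. The program order $\mathsf{po}_\sigma$ is the set of pairs $(e,f)$ with $e$ before $f$ in $\sigma$ and in the same thread; the reads-from relation $\mathsf{rf}_\sigma$ is the set of pairs $(s,r)$ such that for some channel $\mathtt{ch}$ and some $i$, $s$ is the $i$-th send and $r$ the $i$-th receive on $\mathtt{ch}$ in $\sigma$. An abstract execution is $\mathcal{X}=\langle \mathsf{S},\mathsf{po}\rangle$ where $\mathsf{S}$ is a finite set of events and $\mathsf{po}$ is a strict order that totally orders the events of each thread and relates no events of different threads. An instance of $\textsf{VCh-rf}$ is $\langle\mathcal{X},\mathsf{cap},\mathsf{rf}\rangle$ where $\mathsf{cap}$ is a capacity function on the channels occurring in $\mathsf{S}$ and $\mathsf{rf}$ is a set of pairs $(s,r)$ of a send and a receive event of $\mathsf{S}$ on the same channel; it is consistent if there is an execution $\sigma$ whose set of events is $\mathsf{S}$, with $\mathsf{po}_\sigma=\mathsf{po}$, $\sigma$ well-formed, and $\mathsf{rf}_\sigma=\mathsf{rf}$ (values are irrelevant here). $\textsf{VSC-read}$. An instance is $\langle\mathsf{S},\mathsf{po},\mathsf{rf}\rangle$ where $\mathsf{S}$ is a finite set of events of the form $\langle\tau,\mathsf{r}(x)\rangle$ (read of register $x$ by thread $\tau$) or $\langle\tau,\mathsf{w}(x)\rangle$ (write), $\mathsf{po}$ totally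 orders the events of each thread and relates no events of different threads, and $\mathsf{rf}$ maps each read to a write of the same register. It is sequentially consistent if there is a total order on $\mathsf{S}$ extending $\mathsf{po}$ such that for every $(w,r)\in\mathsf{rf}$ on register $x$, $w$ precedes $r$ and no other write to $x$ lies between $w$ and $r$. Construction. Let $\mathcal{R}$ be the set of registers. For a write $e$ let $p_e$ be the number of reads $f$ with $(e,f)\in\mathsf{rf}$, fix an arbitrary enumeration $f_1,\dots,f_{p_e}$ of them, and for $x\in\mathcal{R}$ let $m_x=\max\{p_e: e\text{ a write on }x\}$. $\mathcal{X}'$ has the same threads, channels $\{\mathtt{ch}_x^i: x\in\mathcal{R},1\le i\le m_x\}\cup\{\ell\}$, and $\mathsf{cap}'\equiv1$. Each $e\in\mathsf{S}$ of thread $\tau$ is replaced by a sequence $M(e)$ of fresh events of thread $\tau$: for a write $e$ on $x$, $M(e)=\mathtt{snd}(\ell)\cdot\mathtt{snd}(\mathtt{ch}_x^1)\cdots\mathtt{snd}(\mathtt{ch}_x^{m_x})\cdot\mathtt{rcv}(\mathtt{ch}_x^{p_e+1})\cdots\mathtt{rcv}(\mathtt{ch}_x^{m_x})\cdot\mathtt{rcv}(\ell)$; for the read $f_i$ (the $i$-th read of write $e$ on $x$), $M(f_i)=\mathtt{snd}(\ell)\cdot\mathtt{rcv}(\mathtt{ch}_x^i)\cdot\mathtt{rcv}(\ell)$. $\mathsf{S}'$ is the union of all events of all $M(e)$; $\mathsf{po}'$ orders events within each $M(e)$ by their position and orders all events of $M(e)$ before all events of $M(e')$ whenever $(e,e')\in\mathsf{po}$.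 $\mathsf{rf}'$: in each $M(e)$ the $\mathtt{rcv}(\ell)$ is matched with the $\mathtt{snd}(\ell)$ of the same $M(e)$; for each write $e$ and $1\le i\le p_e$, the $\mathtt{snd}(\mathtt{ch}_x^i)$ of $M(e)$ is matched with the $\mathtt{rcv}(\mathtt{ch}_x^i)$ of $M(f_i)$; for $p_e<j\le m_x$, the $\mathtt{snd}(\mathtt{ch}_x^j)$ of $M(e)$ is matched with the $\mathtt{rcv}(\mathtt{ch}_x^j)$ of $M(e)$. *)

theory Defs
  imports Main
begin

datatype 'x acc = Rd 'x | Wr 'x

fun is_wr :: "'x acc \<Rightarrow> bool" where
  "is_wr (Wr _) = True" | "is_wr (Rd _) = False"

fun regof :: "'x acc \<Rightarrow> 'x" where
  "regof (Wr x) = x" | "regof (Rd x) = x"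

definition vsc_instance ::
  "'e set \<Rightarrow> ('e \<times> 'e) set \<Rightarrow> ('e \<Rightarrow> 't) \<Rightarrow> ('e \<Rightarrow> 'x acc) \<Rightarrow> ('e \<Rightarrow> 'e) \<Rightarrow> bool" where
  "vsc_instance S po thr lab rf \<longleftrightarrow>
     finite S \<and> po \<subseteq> S \<times> S \<and> irrefl po \<and> trans po \<and>
     (\<forall>a\<in>S. \<forall>b\<in>S. a \<noteq> b \<and> thr a = thr b \<longrightarrow> (a, b) \<in> po \<or> (b, a) \<in> po) \<and>
     (\<forall>(a, b)\<in>po. thr a = thr b) \<and>
     (\<forall>r\<in>S. \<not> is_wr (lab r) \<longrightarrow>
        rf r \<in> S \<and> is_wr (lab (rf r)) \<and> regof (lab (rf r)) = regof (lab r))"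

definition before :: "'a list \<Rightarrow> 'a \<Rightarrow> 'a \<Rightarrow> bool" where
  "before \<sigma> a b \<longleftrightarrow> (\<exists>i j. i < j \<and> j < length \<sigma> \<and> \<sigma> ! i = a \<and> \<sigma> ! j = b)"

text \<open>A total order on S is represented by a duplicate-free list enumerating S.\<close>
definition seq_consistent ::
  "'e set \<Rightarrow> ('e \<times> 'e) set \<Rightarrow> ('e \<Rightarrow> 'x acc) \<Rightarrow> ('e \<Rightarrow> 'e) \<Rightarrow> bool" where
  "seq_consistent S po lab rf \<longleftrightarrow>
     (\<exists>\<sigma>. distinct \<sigma> \<and> set \<sigma> = S \<and>
        (\<forall>(a, b)\<in>po. before \<sigma> a b) \<and>
        (\<forall>r\<in>S. \<not> is_wr (lab r) \<longrightarrow>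
           before \<sigma> (rf r) r \<and>
           (\<forall>w\<in>S. is_wr (lab w) \<and> regof (lab w) = regof (lab r) \<and> w \<noteq> rf r \<longrightarrow>
              \<not> (before \<sigma> (rf r) w \<and> before \<sigma> w r))))"

datatype chop = Snd | Rcv

definition sends_on :: "('v \<Rightarrow> chop) \<Rightarrow> ('v \<Rightarrow> 'c) \<Rightarrow> 'c \<Rightarrow> 'v list \<Rightarrow> 'v list" where
  "sends_on op ch c \<sigma> = filter (\<lambda>e. op e = Snd \<and> ch e = c) \<sigma>"

definition rcvs_on :: "('v \<Rightarrow> chop) \<Rightarrow> ('v \<Rightarrow> 'c) \<Rightarrow> 'c \<Rightarrow> 'v list \<Rightarrow> 'v list" where
  "rcvs_on op ch c \<sigma> = filter (\<lambda>e. op e = Rcv \<and> ch e = c) \<sigma>"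

text \<open>Well-formedness conditions (i) and (ii); condition (iii) concerns values, which are
  irrelevant for VCh-rf and are not modelled.\<close>
definition well_formed ::
  "('c \<Rightarrow> nat) \<Rightarrow> ('v \<Rightarrow> 't) \<Rightarrow> ('v \<Rightarrow> chop) \<Rightarrow> ('v \<Rightarrow> 'c) \<Rightarrow> 'v list \<Rightarrow> bool" where
  "well_formed cap thr op ch \<sigma> \<longleftrightarrow>
     (\<forall>c n. 0 < cap c \<longrightarrow> n \<le> length \<sigma> \<longrightarrow>
        length (rcvs_on op ch c (take n \<sigma>)) \<le> length (sends_on op ch c (take n \<sigma>)) \<and>
        length (sends_on op ch c (take n \<sigma>)) \<le> length (rcvs_on op ch c (take n \<sigma>)) + cap c) \<and>
     (\<forall>i < length \<sigma>. cap (ch (\<sigma> ! i)) = 0 \<longrightarrow>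
        (op (\<sigma> ! i) = Snd \<longrightarrow> Suc i < length \<sigma> \<and> op (\<sigma> ! Suc i) = Rcv \<and>
            ch (\<sigma> ! Suc i) = ch (\<sigma> ! i) \<and> thr (\<sigma> ! Suc i) \<noteq> thr (\<sigma> ! i)) \<and>
        (op (\<sigma> ! i) = Rcv \<longrightarrow> 0 < i \<and> op (\<sigma> ! (i - 1)) = Snd \<and>
            ch (\<sigma> ! (i - 1)) = ch (\<sigma> ! i) \<and> thr (\<sigma> ! (i - 1)) \<noteq> thr (\<sigma> ! i)))"

definition po_of :: "('v \<Rightarrow> 't) \<Rightarrow> 'v list \<Rightarrow> ('v \<times> 'v) set" where
  "po_of thr \<sigma> = {(\<sigma> ! i, \<sigma> ! j) | i j. i < j \<and> j < length \<sigma> \<and> thr (\<sigma> ! i) = thr (\<sigma> ! j)}"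

definition rf_of :: "('v \<Rightarrow> chop) \<Rightarrow> ('v \<Rightarrow> 'c) \<Rightarrow> 'v list \<Rightarrow> ('v \<times> 'v) set" where
  "rf_of op ch \<sigma> = {(s, r). \<exists>c i. i < length (sends_on op ch c \<sigma>) \<and> i < length (rcvs_on op ch c \<sigma>) \<and>
      sends_on op ch c \<sigma> ! i = s \<and> rcvs_on op ch c \<sigma> ! i = r}"

definition vch_consistent ::
  "'v set \<Rightarrow> ('v \<times> 'v) set \<Rightarrow> ('c \<Rightarrow> nat) \<Rightarrow> ('v \<Rightarrow> 't) \<Rightarrow> ('v \<Rightarrow> chop) \<Rightarrow> ('v \<Rightarrow> 'c)
     \<Rightarrow> ('v \<times> 'v) set \<Rightarrow> bool" where
  "vch_consistent S po cap thr op ch rf \<longleftrightarrow>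
     (\<exists>\<sigma>. distinct \<sigma> \<and> set \<sigma> = S \<and> po_of thr \<sigma> = po \<and> well_formed cap thr op ch \<sigma> \<and>
          rf_of op ch \<sigma> = rf)"

datatype 'x chan = Lch | Cch 'x nat

definition readers :: "'e set \<Rightarrow> ('e \<Rightarrow> 'x acc) \<Rightarrow> ('e \<Rightarrow> 'e) \<Rightarrow> 'e \<Rightarrow> 'e set" where
  "readers S lab rf w = {r \<in> S. \<not> is_wr (lab r) \<and> rf r = w}"

definition mreg :: "'e set \<Rightarrow> ('e \<Rightarrow> 'x acc) \<Rightarrow> ('e \<Rightarrow> 'e) \<Rightarrow> 'x \<Rightarrow> nat" where
  "mreg S lab rf x = Max (insert 0 {card (readers S lab rf w) | w. w \<in> S \<and> lab w = Wr x})"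

text \<open>idx r = i means r is the i-th read f_i of its write; it enumerates the readers of
  every write w as 1..p_w.\<close>
definition valid_enum :: "'e set \<Rightarrow> ('e \<Rightarrow> 'x acc) \<Rightarrow> ('e \<Rightarrow> 'e) \<Rightarrow> ('e \<Rightarrow> nat) \<Rightarrow> bool" where
  "valid_enum S lab rf idx \<longleftrightarrow>
     (\<forall>w\<in>S. is_wr (lab w) \<longrightarrow>
        bij_betw idx (readers S lab rf w) {1..card (readers S lab rf w)})"

definition Mseq ::
  "'e set \<Rightarrow> ('e \<Rightarrow> 'x acc) \<Rightarrow> ('e \<Rightarrow> 'e) \<Rightarrow> ('e \<Rightarrow> nat) \<Rightarrow> 'e \<Rightarrow> (chop \<times> 'x chan) list" where
  "Mseq S lab rf idx e =
     (case lab e of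
        Wr x \<Rightarrow>
          [(Snd, Lch)] @ map (\<lambda>j. (Snd, Cch x j)) [1..<mreg S lab rf x + 1]
          @ map (\<lambda>j. (Rcv, Cch x j)) [card (readers S lab rf e) + 1..<mreg S lab rf x + 1]
          @ [(Rcv, Lch)]
      | Rd x \<Rightarrow> [(Snd, Lch), (Rcv, Cch x (idx e)), (Rcv, Lch)])"

text \<open>Event (e,k) is the k-th (0-based) event of M(e).\<close>
definition S' :: "'e set \<Rightarrow> ('e \<Rightarrow> 'x acc) \<Rightarrow> ('e \<Rightarrow> 'e) \<Rightarrow> ('e \<Rightarrow> nat) \<Rightarrow> ('e \<times> nat) set" where
  "S' S lab rf idx = {(e, k). e \<in> S \<and> k < length (Mseq S lab rf idx e)}"

definition thr' :: "('e \<Rightarrow> 't) \<Rightarrow> 'e \<times> nat \<Rightarrow> 't" where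
  "thr' thr v = thr (fst v)"

definition op' :: "'e set \<Rightarrow> ('e \<Rightarrow> 'x acc) \<Rightarrow> ('e \<Rightarrow> 'e) \<Rightarrow> ('e \<Rightarrow> nat) \<Rightarrow> 'e \<times> nat \<Rightarrow> chop" where
  "op' S lab rf idx v = fst (Mseq S lab rf idx (fst v) ! snd v)"

definition ch' :: "'e set \<Rightarrow> ('e \<Rightarrow> 'x acc) \<Rightarrow> ('e \<Rightarrow> 'e) \<Rightarrow> ('e \<Rightarrow> nat) \<Rightarrow> 'e \<times> nat \<Rightarrow> 'x chan" where
  "ch' S lab rf idx v = snd (Mseq S lab rf idx (fst v) ! snd v)"

definition po' ::
  "'e set \<Rightarrow> ('e \<times> 'e) set \<Rightarrow> ('e \<Rightarrow> 'x acc) \<Rightarrow> ('e \<Rightarrow> 'e) \<Rightarrow> ('e \<Rightarrow> nat) \<Rightarrow> (('e \<times> nat) \<times> ('e \<times> nat)) set" where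
  "po' S po lab rf idx =
     {((e, k), (e', k')). (e, k) \<in> S' S lab rf idx \<and> (e', k') \<in> S' S lab rf idx \<and>
        ((e = e' \<and> k < k') \<or> (e, e') \<in> po)}"

definition rf' ::
  "'e set \<Rightarrow> ('e \<Rightarrow> 'x acc) \<Rightarrow> ('e \<Rightarrow> 'e) \<Rightarrow> ('e \<Rightarrow> nat) \<Rightarrow> (('e \<times> nat) \<times> ('e \<times> nat)) set" where
  "rf' S lab rf idx =
     {((e, 0), (e, length (Mseq S lab rf idx e) - 1)) | e. e \<in> S}
     \<union> {((w, idx r), (r, 1)) | w r. w \<in> S \<and> is_wr (lab w) \<and> r \<in> readers S lab rf w}
     \<union> {((w, j), (w, mreg S lab rf x + j - card (readers S lab rf w))) | w x j.
          w \<in> S \<and> lab w = Wr x \<and> card (readers S lab rf w) < j \<and> j \<le> mreg S lab rf x}"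

end

theory Submission
  imports Defs
begin

(* With capacity one, a well-formed execution is one in which the events of every channel
   alternate snd, rcv, snd, ..., and its reads-from relation matches each send with the next
   event on the same channel.

   Given a sequentially consistent order, replace every event e by its block M(e). The
   \<ell>-pair brackets the block, the self-matched pairs on ch_x^j (j > p_e) stay inside it, and
   the send on ch_x^i of a write w is followed on that channel by its i-th reader r: an event
   of ch_x^i strictly between them would be a write on x or a read of x from another write,
   lying between w and r, which SC forbids.

   Conversely, no \<ell>-event can lie strictly inside the \<ell>-pair of a block, so in a consistent
   execution the blocks are contiguous and ordering the events of S by the first events of
   their blocks gives an SC order: a write w' on x between rf r and r would put its send on
   ch_x^(idx r) between the matched send of rf r and receive of r. *)

subsection \<open>Relative position in a list\<close>

lemma before_Nil [simp]: "\<not> before [] a b"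
  by (simp add: before_def)

lemma before_Cons: "before (x # xs) a b \<longleftrightarrow> (x = a \<and> b \<in> set xs) \<or> before xs a b"
proof
  assume "before (x # xs) a b"
  then obtain i j where ij: "i < j" "j < length (x # xs)" "(x # xs) ! i = a" "(x # xs) ! j = b"
    by (auto simp: before_def)
  then obtain j' where j: "j = Suc j'"
    by (cases j) auto
  show "(x = a \<and> b \<in> set xs) \<or> before xs a b"
  proof (cases i)
    case 0
    then show ?thesis using ij j by auto
  next
    case (Suc i')
    then have "before xs a b"
      using ij j unfolding before_def by (intro exI[of _ i'] exI[of _ j']) auto
    then show ?thesis ..
  qed
next
  assume "(x = a \<and> b \<in> set xs) \<or> before xs a b"
  then show "before (x # xs) a b"
  proof
    assume "x = a \<and> b \<in> set xs"
    then obtain j where "j < length xs" "xs ! j = b" "x = a"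
      by (auto simp: in_set_conv_nth)
    then show ?thesis
      unfolding before_def by (intro exI[of _ 0] exI[of _ "Suc j"]) auto
  next
    assume "before xs a b"
    then obtain i j where "i < j" "j < length xs" "xs ! i = a" "xs ! j = b"
      by (auto simp: before_def)
    then show ?thesis
      unfolding before_def by (intro exI[of _ "Suc i"] exI[of _ "Suc j"]) auto
  qed
qed

lemma before_in_set: "before xs a b \<Longrightarrow> a \<in> set xs \<and> b \<in> set xs"
  by (induction xs) (auto simp: before_Cons)

lemma before_asym: "distinct xs \<Longrightarrow> before xs a b \<Longrightarrow> \<not> before xs b a"
  by (induction xs) (auto simp: before_Cons dest: before_in_set)

lemma before_trans: "distinct xs \<Longrightarrow> before xs a b \<Longrightarrow> before xs b c \<Longrightarrow> before xs a c"
  by (induction xs) (auto simp: before_Cons dest: before_in_set)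

lemma before_total: "a \<in> set xs \<Longrightarrow> b \<in> set xs \<Longrightarrow> a \<noteq> b \<Longrightarrow> before xs a b \<or> before xs b a"
  by (induction xs) (auto simp: before_Cons)

lemma before_filter: "before (filter P xs) a b \<longleftrightarrow> before xs a b \<and> P a \<and> P b"
  by (induction xs) (auto simp: before_Cons dest: before_in_set)

lemma before_map_inj: "inj f \<Longrightarrow> before (map f xs) (f a) (f b) \<longleftrightarrow> before xs a b"
  by (induction xs) (auto simp: before_Cons inj_eq inj_image_mem_iff)

lemma before_append:
  "before (xs @ ys) a b \<longleftrightarrow> before xs a b \<or> (a \<in> set xs \<and> b \<in> set ys) \<or> before ys a b"
  by (induction xs) (auto simp: before_Cons)

lemma before_nth:
  "distinct xs \<Longrightarrow> i < length xs \<Longrightarrow> j < length xs \<Longrightarrow> before xs (xs ! i) (xs ! j) \<longleftrightarrow> i < j"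
  unfolding before_def using nth_eq_iff_index_eq by (metis order.strict_trans)

lemma before_upt: "before [0..<n] i j \<longleftrightarrow> i < j \<and> j < n"
  using before_nth[of "[0..<n]" i j] before_in_set[of "[0..<n]" i j] by auto

lemma po_of_eq_before: "po_of thr \<sigma> = {(a, b). before \<sigma> a b \<and> thr a = thr b}"
  unfolding po_of_def before_def by blast

definition adjacent_in :: "('v \<Rightarrow> bool) \<Rightarrow> 'v list \<Rightarrow> 'v \<Rightarrow> 'v \<Rightarrow> bool" where
  "adjacent_in P \<sigma> s r \<longleftrightarrow> P s \<and> P r \<and> before \<sigma> s r \<and> (\<forall>v. P v \<longrightarrow> \<not> (before \<sigma> s v \<and> before \<sigma> v r))"

lemma adjacent_in_iff_consecutive:
  assumes "distinct \<sigma>"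
  shows "adjacent_in P \<sigma> s r \<longleftrightarrow>
    (\<exists>k. Suc k < length (filter P \<sigma>) \<and> filter P \<sigma> ! k = s \<and> filter P \<sigma> ! Suc k = r)"
    (is "_ \<longleftrightarrow> (\<exists>k. Suc k < length ?L \<and> _)")
proof
  have dL: "distinct ?L" using assms by simp
  assume adj: "adjacent_in P \<sigma> s r"
  then have bL: "before ?L s r"
    by (simp add: adjacent_in_def before_filter)
  then obtain i j where ij: "i < length ?L" "j < length ?L" "?L ! i = s" "?L ! j = r"
    using before_in_set by (metis in_set_conv_nth)
  have "i < j" using before_nth[OF dL ij(1,2)] ij bL by simp
  moreover have "\<not> Suc i < j"
  proof
    assume "Suc i < j"
    then have "before ?L s (?L ! Suc i)" "before ?L (?L ! Suc i) r"
      using before_nth[OF dL] ij by auto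
    then show False using adj by (auto simp: adjacent_in_def before_filter)
  qed
  ultimately have "j = Suc i" by simp
  then show "\<exists>k. Suc k < length ?L \<and> ?L ! k = s \<and> ?L ! Suc k = r"
    using ij by blast
next
  have dL: "distinct ?L" using assms by simp
  assume "\<exists>k. Suc k < length ?L \<and> ?L ! k = s \<and> ?L ! Suc k = r"
  then obtain k where k: "Suc k < length ?L" "?L ! k = s" "?L ! Suc k = r"
    by blast
  have nb: "\<not> (before ?L s v \<and> before ?L v r)" for v
  proof
    assume b: "before ?L s v \<and> before ?L v r"
    then obtain j where j: "j < length ?L" "?L ! j = v"
      using before_in_set by (metis in_set_conv_nth)
    then show False
      using b before_nth[OF dL, of k j] before_nth[OF dL, of j "Suc k"] k by auto
  qed
  have "s \<in> set ?L" "r \<in> set ?L"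
    using k nth_mem[of k ?L] nth_mem[of "Suc k" ?L] by auto
  then show "adjacent_in P \<sigma> s r"
    using nb before_nth[OF dL, of k "Suc k"] k by (auto simp: adjacent_in_def before_filter)
qed

lemma adjacent_in_unique:
  assumes "distinct \<sigma>" "adjacent_in P \<sigma> s r" "adjacent_in P \<sigma> s r'"
  shows "r = r'"
  using assms unfolding adjacent_in_def by (metis before_in_set before_total)

subsection \<open>Channels of capacity one\<close>

inductive alternating :: "('v \<Rightarrow> chop) \<Rightarrow> 'v list \<Rightarrow> bool" for op where
  Nil: "alternating op []"
| single: "op a = Snd \<Longrightarrow> alternating op [a]"
| Cons_Cons: "op a = Snd \<Longrightarrow> op b = Rcv \<Longrightarrow> alternating op xs \<Longrightarrow> alternating op (a # b # xs)"

abbreviation count_op :: "('v \<Rightarrow> chop) \<Rightarrow> chop \<Rightarrow> 'v list \<Rightarrow> nat" where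
  "count_op op d xs \<equiv> length (filter (\<lambda>e. op e = d) xs)"

definition balanced :: "('v \<Rightarrow> chop) \<Rightarrow> 'v list \<Rightarrow> bool" where
  "balanced op xs \<longleftrightarrow> count_op op Rcv xs \<le> count_op op Snd xs \<and> count_op op Snd xs \<le> count_op op Rcv xs + 1"

lemma alternating_iff_balanced_prefixes: "alternating op xs \<longleftrightarrow> (\<forall>m. balanced op (take m xs))"
proof
  assume "alternating op xs"
  then show "\<forall>m. balanced op (take m xs)"
    unfolding balanced_def
  proof (induction rule: alternating.induct)
    case (Cons_Cons a b xs)
    show ?case
    proof
      fix m
      show "count_op op Rcv (take m (a # b # xs)) \<le> count_op op Snd (take m (a # b # xs)) \<and>
          count_op op Snd (take m (a # b # xs)) \<le> count_op op Rcv (take m (a # b # xs)) + 1"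
        using Cons_Cons.hyps Cons_Cons.IH[rule_format, of "m - 2"]
        by (cases m; cases "m - 1") auto
    qed
  qed (auto simp: take_Cons')
next
  assume "\<forall>m. balanced op (take m xs)"
  then show "alternating op xs"
    unfolding balanced_def
  proof (induction xs rule: induct_list012)
    case (2 a)
    then show ?case
      using "2"[rule_format, of 1] by (cases "op a") (auto intro: alternating.single)
  next
    case (3 a b xs)
    have a: "op a = Snd"
      using "3.prems"[rule_format, of 1] by (cases "op a") auto
    moreover have "op b = Rcv"
      using "3.prems"[rule_format, of 2] a by (cases "op b") auto
    moreover have "alternating op xs"
      using "3.prems"[rule_format, of "Suc (Suc m)" for m] a \<open>op b = Rcv\<close>
      by (intro "3.IH"(1)) auto
    ultimately show ?case by (rule alternating.Cons_Cons)
  qed (simp add: alternating.Nil)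
qed

lemma filter_take_eq_take_filter: "\<exists>m. filter P (take n xs) = take m (filter P xs)"
  by (metis append_eq_conv_conj append_take_drop_id filter_append)

lemma take_filter_eq_filter_take: "\<exists>n \<le> length xs. filter P (take n xs) = take m (filter P xs)"
proof (induction xs arbitrary: m)
  case (Cons x xs)
  show ?case
  proof (cases "m = 0")
    case True
    then show ?thesis by (intro exI[of _ 0]) auto
  next
    case False
    obtain n where "n \<le> length xs" "filter P (take n xs) = take (if P x then m - 1 else m) (filter P xs)"
      using Cons.IH by blast
    then show ?thesis
      using False by (intro exI[of _ "Suc n"]) (cases m, auto)
  qed
qed simp

lemma all_filter_prefixes_iff:
  "(\<forall>n \<le> length xs. Q (filter P (take n xs))) \<longleftrightarrow> (\<forall>m. Q (take m (filter P xs)))"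
proof (intro iffI allI impI)
  fix m
  assume "\<forall>n \<le> length xs. Q (filter P (take n xs))"
  moreover obtain n where "n \<le> length xs" "filter P (take n xs) = take m (filter P xs)"
    using take_filter_eq_filter_take by blast
  ultimately show "Q (take m (filter P xs))" by metis
next
  fix n
  assume "\<forall>m. Q (take m (filter P xs))"
  moreover obtain m where "filter P (take n xs) = take m (filter P xs)"
    using filter_take_eq_take_filter by blast
  ultimately show "Q (filter P (take n xs))" by metis
qed

lemma sends_on_eq: "sends_on op ch c xs = filter (\<lambda>e. op e = Snd) (filter (\<lambda>v. ch v = c) xs)"
  by (simp add: sends_on_def filter_filter conj_commute)

lemma rcvs_on_eq: "rcvs_on op ch c xs = filter (\<lambda>e. op e = Rcv) (filter (\<lambda>v. ch v = c) xs)"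
  by (simp add: rcvs_on_def filter_filter conj_commute)

lemma well_formed_cap1_iff:
  "well_formed (\<lambda>_. 1) thr op ch \<sigma> \<longleftrightarrow> (\<forall>c. alternating op (filter (\<lambda>v. ch v = c) \<sigma>))"
proof -
  have "well_formed (\<lambda>_. 1) thr op ch \<sigma> \<longleftrightarrow>
      (\<forall>c. \<forall>n \<le> length \<sigma>. balanced op (filter (\<lambda>v. ch v = c) (take n \<sigma>)))"
    unfolding well_formed_def balanced_def sends_on_eq rcvs_on_eq by simp
  then show ?thesis
    by (simp only: all_filter_prefixes_iff alternating_iff_balanced_prefixes)
qed

lemma alternating_nth:
  "alternating op L \<Longrightarrow> k < length L \<Longrightarrow> op (L ! k) = (if even k then Snd else Rcv)"
proof (induction arbitrary: k rule: alternating.induct)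
  case (Cons_Cons a b xs)
  then show ?case by (cases k; cases "k - 1") auto
qed auto

lemma ex_even_iff: "(\<exists>k::nat. even k \<and> P k) \<longleftrightarrow> P 0 \<or> (\<exists>k. even k \<and> P (Suc (Suc k)))"
  by (metis dvd_0_right even_Suc old.nat.exhaust)

lemma alternating_zip_iff:
  "alternating op L \<Longrightarrow> (s, r) \<in> set (zip (filter (\<lambda>e. op e = Snd) L) (filter (\<lambda>e. op e = Rcv) L)) \<longleftrightarrow>
     (\<exists>k. even k \<and> Suc k < length L \<and> L ! k = s \<and> L ! Suc k = r)"
proof (induction rule: alternating.induct)
  case (Cons_Cons a b xs)
  then show ?case by (subst ex_even_iff) auto
qed auto

lemma alternating_if_neighbours:
  assumes "\<forall>k < length L. (op (L ! k) = Snd \<longrightarrow> Suc k < length L \<and> op (L ! Suc k) = Rcv) \<and>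
     (op (L ! k) = Rcv \<longrightarrow> 0 < k \<and> op (L ! (k - 1)) = Snd)"
  shows "alternating op L"
  using assms
proof (induction L rule: induct_list012)
  case (2 a)
  then show ?case by (cases "op a") (auto intro: alternating.single)
next
  case (3 a b xs)
  have a: "op a = Snd" and b: "op b = Rcv"
    using "3.prems"[rule_format, of 0] by (cases "op a"; auto)+
  have "alternating op xs"
  proof (rule "3.IH"(1), intro allI impI)
    fix k
    assume k: "k < length xs"
    then show "(op (xs ! k) = Snd \<longrightarrow> Suc k < length xs \<and> op (xs ! Suc k) = Rcv) \<and>
        (op (xs ! k) = Rcv \<longrightarrow> 0 < k \<and> op (xs ! (k - 1)) = Snd)"
      using "3.prems"[rule_format, of "Suc (Suc k)"] b by (cases k) auto
  qed
  with a b show ?case by (rule alternating.Cons_Cons)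
qed (simp add: alternating.Nil)

lemma rf_of_cap1_iff:
  assumes dist: "distinct \<sigma>" and wf: "well_formed (\<lambda>_. 1) thr op ch \<sigma>"
  shows "(s, r) \<in> rf_of op ch \<sigma> \<longleftrightarrow> op s = Snd \<and> op r = Rcv \<and> adjacent_in (\<lambda>v. ch v = ch s) \<sigma> s r"
proof -
  let ?L = "\<lambda>c. filter (\<lambda>v. ch v = c) \<sigma>"
  have alt: "alternating op (?L c)" for c
    using well_formed_cap1_iff[THEN iffD1, OF wf] by blast
  have "(s, r) \<in> rf_of op ch \<sigma> \<longleftrightarrow> (\<exists>c. (s, r) \<in> set (zip (sends_on op ch c \<sigma>) (rcvs_on op ch c \<sigma>)))"
    by (auto simp: rf_of_def set_zip)
  also have "\<dots> \<longleftrightarrow> (\<exists>c k. even k \<and> Suc k < length (?L c) \<and> ?L c ! k = s \<and> ?L c ! Suc k = r)"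
    by (simp only: sends_on_eq rcvs_on_eq alternating_zip_iff[OF alt])
  also have "\<dots> \<longleftrightarrow> op s = Snd \<and> op r = Rcv \<and>
      (\<exists>k. Suc k < length (?L (ch s)) \<and> ?L (ch s) ! k = s \<and> ?L (ch s) ! Suc k = r)"
  proof
    assume "\<exists>c k. even k \<and> Suc k < length (?L c) \<and> ?L c ! k = s \<and> ?L c ! Suc k = r"
    then obtain c k where k: "even k" "Suc k < length (?L c)" "?L c ! k = s" "?L c ! Suc k = r"
      by blast
    moreover have "ch s = c"
      using nth_mem[of k "?L c"] k by auto
    ultimately show "op s = Snd \<and> op r = Rcv \<and>
        (\<exists>k. Suc k < length (?L (ch s)) \<and> ?L (ch s) ! k = s \<and> ?L (ch s) ! Suc k = r)"
      using alternating_nth[OF alt, of k c] alternating_nth[OF alt, of "Suc k" c] by auto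
  next
    assume "op s = Snd \<and> op r = Rcv \<and>
        (\<exists>k. Suc k < length (?L (ch s)) \<and> ?L (ch s) ! k = s \<and> ?L (ch s) ! Suc k = r)"
    then obtain k where "op s = Snd" "Suc k < length (?L (ch s))" "?L (ch s) ! k = s" "?L (ch s) ! Suc k = r"
      by blast
    moreover from this have "even k"
      using alternating_nth[OF alt, of k "ch s"] by (auto split: if_splits)
    ultimately show "\<exists>c k. even k \<and> Suc k < length (?L c) \<and> ?L c ! k = s \<and> ?L c ! Suc k = r"
      by blast
  qed
  finally show ?thesis
    by (simp add: adjacent_in_iff_consecutive[OF dist])
qed

lemma well_formed_cap1_if_matching:
  assumes dist: "distinct \<sigma>"
    and matched: "\<forall>(s, r) \<in> R. op s = Snd \<and> op r = Rcv \<and> adjacent_in (\<lambda>v. ch v = ch s) \<sigma> s r"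
    and sends: "\<forall>s \<in> set \<sigma>. op s = Snd \<longrightarrow> (\<exists>r. (s, r) \<in> R)"
    and rcvs: "\<forall>r \<in> set \<sigma>. op r = Rcv \<longrightarrow> (\<exists>s. (s, r) \<in> R)"
  shows "well_formed (\<lambda>_. 1) thr op ch \<sigma>"
proof -
  let ?L = "\<lambda>c. filter (\<lambda>v. ch v = c) \<sigma>"
  have consec: "\<exists>k. Suc k < length (?L (ch s)) \<and> ?L (ch s) ! k = s \<and> ?L (ch s) ! Suc k = r"
    if "(s, r) \<in> R" for s r
    using that matched by (auto simp: adjacent_in_iff_consecutive[OF dist, symmetric])
  have "alternating op (?L c)" for c
  proof (rule alternating_if_neighbours, intro allI impI conjI)
    have dL: "distinct (?L c)" using dist by simp
    fix k
    assume k: "k < length (?L c)"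
    then have in_\<sigma>: "?L c ! k \<in> set \<sigma>" and ch: "ch (?L c ! k) = c"
      using nth_mem[OF k] by auto
    {
      assume "op (?L c ! k) = Snd"
      then obtain r where r: "(?L c ! k, r) \<in> R"
        using sends in_\<sigma> by blast
      then obtain k' where "Suc k' < length (?L c)" "?L c ! k' = ?L c ! k" "?L c ! Suc k' = r"
        using consec[OF r] unfolding ch by blast
      moreover from this have "k' = k"
        using nth_eq_iff_index_eq[OF dL, of k' k] k by simp
      ultimately show "Suc k < length (?L c)" "op (?L c ! Suc k) = Rcv"
        using matched r by auto
    next
      assume "op (?L c ! k) = Rcv"
      then obtain s where s: "(s, ?L c ! k) \<in> R"
        using rcvs in_\<sigma> by blast
      then have "ch s = c"
        using matched ch by (auto simp: adjacent_in_def)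
      then obtain k' where "Suc k' < length (?L c)" "?L c ! k' = s" "?L c ! Suc k' = ?L c ! k"
        using consec[OF s] by blast
      moreover from this have "Suc k' = k"
        using nth_eq_iff_index_eq[OF dL, of "Suc k'" k] k by simp
      ultimately show "0 < k" "op (?L c ! (k - 1)) = Snd"
        using matched s by auto
    }
  qed
  then show ?thesis
    using well_formed_cap1_iff[THEN iffD2] by blast
qed

lemma rf_of_cap1_eq_if_matching:
  assumes dist: "distinct \<sigma>" and wf: "well_formed (\<lambda>_. 1) thr op ch \<sigma>"
    and matched: "\<forall>(s, r) \<in> R. op s = Snd \<and> op r = Rcv \<and> adjacent_in (\<lambda>v. ch v = ch s) \<sigma> s r"
    and sends: "\<forall>s \<in> set \<sigma>. op s = Snd \<longrightarrow> (\<exists>r. (s, r) \<in> R)"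
  shows "rf_of op ch \<sigma> = R"
proof (intro set_eqI iffI)
  fix p
  assume "p \<in> rf_of op ch \<sigma>"
  moreover obtain s r where p: "p = (s, r)" by fastforce
  ultimately have s: "op s = Snd" and adj: "adjacent_in (\<lambda>v. ch v = ch s) \<sigma> s r"
    by (simp_all add: rf_of_cap1_iff[OF dist wf])
  then obtain r' where r': "(s, r') \<in> R"
    using sends before_in_set by (fastforce simp: adjacent_in_def)
  then have "r' = r"
    using adjacent_in_unique[OF dist _ adj] matched by auto
  then show "p \<in> R" using r' p by simp
next
  fix p
  assume "p \<in> R"
  then show "p \<in> rf_of op ch \<sigma>"
    using matched by (auto simp: rf_of_cap1_iff[OF dist wf])
qed

subsection \<open>Expanding events into blocks\<close>

definition expand :: "('e \<Rightarrow> nat) \<Rightarrow> 'e list \<Rightarrow> ('e \<times> nat) list" where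
  "expand n \<sigma> = concat (map (\<lambda>e. map (Pair e) [0..<n e]) \<sigma>)"

lemma set_expand: "set (expand n \<sigma>) = {(e, k). e \<in> set \<sigma> \<and> k < n e}"
  by (auto simp: expand_def)

lemma distinct_expand: "distinct \<sigma> \<Longrightarrow> distinct (expand n \<sigma>)"
  by (induction \<sigma>) (auto simp: expand_def distinct_map inj_on_def)

lemma before_block:
  "before (map (Pair e) [0..<m]) (e1, k1) (e2, k2) \<longleftrightarrow> e1 = e \<and> e2 = e \<and> k1 < k2 \<and> k2 < m"
proof -
  have "before (map (Pair e) [0..<m]) (e1, k1) (e2, k2) \<Longrightarrow> e1 = e \<and> e2 = e"
    by (auto dest: before_in_set)
  then show ?thesis
    using before_map_inj[of "Pair e" "[0..<m]" k1 k2] by (auto simp: inj_def before_upt)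
qed

lemma before_expand:
  "distinct \<sigma> \<Longrightarrow> before (expand n \<sigma>) (e1, k1) (e2, k2) \<longleftrightarrow>
     e1 \<in> set \<sigma> \<and> e2 \<in> set \<sigma> \<and> k1 < n e1 \<and> k2 < n e2 \<and>
     ((e1 = e2 \<and> k1 < k2) \<or> (e1 \<noteq> e2 \<and> before \<sigma> e1 e2))"
proof (induction \<sigma>)
  case (Cons e \<sigma>)
  have "expand n (e # \<sigma>) = map (Pair e) [0..<n e] @ expand n \<sigma>"
    by (simp add: expand_def)
  then show ?case
    using Cons by (auto simp: before_append before_block before_Cons set_expand dest: before_in_set)
qed (simp add: expand_def)

lemma between_in_expand_block:
  assumes "distinct \<sigma>" "before (expand n \<sigma>) (e, k1) v" "before (expand n \<sigma>) v (e, k2)"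
  shows "\<exists>k. v = (e, k) \<and> k1 < k \<and> k < k2"
proof -
  obtain e' k where v: "v = (e', k)" by fastforce
  show ?thesis
    using assms before_asym[OF assms(1)] unfolding v by (auto simp: before_expand)
qed

definition first_events :: "('e \<times> nat) list \<Rightarrow> 'e list" where
  "first_events \<tau> = map fst (filter (\<lambda>v. snd v = 0) \<tau>)"

lemma filter_first_events: "filter (\<lambda>v. snd v = 0) \<tau> = map (\<lambda>e. (e, 0)) (first_events \<tau>)"
  unfolding first_events_def by (induction \<tau>) auto

lemma set_first_events: "set (first_events \<tau>) = {e. (e, 0) \<in> set \<tau>}"
  by (force simp: first_events_def)

lemma distinct_first_events: "distinct \<tau> \<Longrightarrow> distinct (first_events \<tau>)"
  using distinct_filter[of \<tau> "\<lambda>v. snd v = 0"]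
  by (simp add: filter_first_events distinct_map)

lemma before_first_events: "before (first_events \<tau>) a b \<longleftrightarrow> before \<tau> (a, 0) (b, 0)"
proof -
  have "before (first_events \<tau>) a b \<longleftrightarrow> before (filter (\<lambda>v. snd v = 0) \<tau>) (a, 0) (b, 0)"
    unfolding filter_first_events by (rule before_map_inj[symmetric]) (simp add: inj_def)
  then show ?thesis
    by (simp add: before_filter)
qed

subsection \<open>The reduction\<close>

locale vsc_reduction =
  fixes S :: "'e set" and po :: "('e \<times> 'e) set" and thr :: "'e \<Rightarrow> 't"
    and lab :: "'e \<Rightarrow> 'x acc" and rf :: "'e \<Rightarrow> 'e" and idx :: "'e \<Rightarrow> nat"
  assumes vsc: "vsc_instance S po thr lab rf"
    and enum: "valid_enum S lab rf idx"
begin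

abbreviation M :: "'e \<Rightarrow> (chop \<times> 'x chan) list" where
  "M \<equiv> Mseq S lab rf idx"

abbreviation RD :: "'e \<Rightarrow> 'e set" where
  "RD \<equiv> readers S lab rf"

abbreviation mr :: "'x \<Rightarrow> nat" where
  "mr \<equiv> mreg S lab rf"

abbreviation SS :: "('e \<times> nat) set" where
  "SS \<equiv> S' S lab rf idx"

abbreviation OP :: "'e \<times> nat \<Rightarrow> chop" where
  "OP \<equiv> op' S lab rf idx"

abbreviation CH :: "'e \<times> nat \<Rightarrow> 'x chan" where
  "CH \<equiv> ch' S lab rf idx"

abbreviation PO :: "(('e \<times> nat) \<times> ('e \<times> nat)) set" where
  "PO \<equiv> po' S po lab rf idx"

abbreviation RF :: "(('e \<times> nat) \<times> ('e \<times> nat)) set" where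
  "RF \<equiv> rf' S lab rf idx"

abbreviation TH :: "'e \<times> nat \<Rightarrow> 't" where
  "TH \<equiv> thr' thr"

abbreviation len :: "'e \<Rightarrow> nat" where
  "len e \<equiv> length (M e)"

lemma po_edgeD: "(a, b) \<in> po \<Longrightarrow> a \<in> S \<and> b \<in> S \<and> a \<noteq> b \<and> thr a = thr b"
  using vsc by (auto simp: vsc_instance_def irrefl_def)

lemma po_total_on_thread:
  "a \<in> S \<Longrightarrow> b \<in> S \<Longrightarrow> a \<noteq> b \<Longrightarrow> thr a = thr b \<Longrightarrow> (a, b) \<in> po \<or> (b, a) \<in> po"
  using vsc by (auto simp: vsc_instance_def)

lemma rf_write: "r \<in> S \<Longrightarrow> lab r = Rd x \<Longrightarrow> rf r \<in> S \<and> lab (rf r) = Wr x"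
  using vsc by (cases "lab (rf r)") (auto simp: vsc_instance_def)

lemma readers_iff: "r \<in> RD w \<longleftrightarrow> r \<in> S \<and> \<not> is_wr (lab r) \<and> rf r = w"
  by (simp add: readers_def)

lemma reader_in_readers: "r \<in> S \<Longrightarrow> lab r = Rd x \<Longrightarrow> r \<in> RD (rf r)"
  by (simp add: readers_iff)

lemma card_readers_le_mreg: "w \<in> S \<Longrightarrow> lab w = Wr x \<Longrightarrow> card (RD w) \<le> mr x"
  using vsc unfolding mreg_def vsc_instance_def by (intro Max_ge) auto

lemma idx_bij: "w \<in> S \<Longrightarrow> lab w = Wr x \<Longrightarrow> bij_betw idx (RD w) {1..card (RD w)}"
  using enum by (simp add: valid_enum_def)

lemma idx_range: "r \<in> S \<Longrightarrow> lab r = Rd x \<Longrightarrow> 1 \<le> idx r \<and> idx r \<le> card (RD (rf r))"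
  using idx_bij[of "rf r" x] rf_write[of r x] reader_in_readers[of r x] by (auto simp: bij_betw_def)

lemma idx_inj: "r \<in> S \<Longrightarrow> lab r = Rd x \<Longrightarrow> e \<in> RD (rf r) \<Longrightarrow> idx e = idx r \<Longrightarrow> e = r"
  using idx_bij[of "rf r" x] rf_write[of r x] reader_in_readers[of r x]
  by (auto simp: bij_betw_def inj_on_def)

lemma idx_surj: "w \<in> S \<Longrightarrow> lab w = Wr x \<Longrightarrow> 1 \<le> j \<Longrightarrow> j \<le> card (RD w) \<Longrightarrow> \<exists>r\<in>RD w. idx r = j"
  using idx_bij[of w x] unfolding bij_betw_def by (metis atLeastAtMost_iff imageE)

lemma length_M_Wr: "w \<in> S \<Longrightarrow> lab w = Wr x \<Longrightarrow> length (M w) = mr x + (mr x - card (RD w)) + 2"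
  using card_readers_le_mreg[of w x] by (simp add: Mseq_def del: upt_Suc)

lemma nth_M_Wr:
  "w \<in> S \<Longrightarrow> lab w = Wr x \<Longrightarrow> k < length (M w) \<Longrightarrow>
   M w ! k = (if k = 0 then (Snd, Lch) else if k \<le> mr x then (Snd, Cch x k)
              else if k \<le> mr x + (mr x - card (RD w)) then (Rcv, Cch x (k - mr x + card (RD w)))
              else (Rcv, Lch))"
  using card_readers_le_mreg[of w x] by (auto simp: Mseq_def nth_append simp del: upt_Suc)

lemma M_Rd: "lab r = Rd x \<Longrightarrow> M r = [(Snd, Lch), (Rcv, Cch x (idx r)), (Rcv, Lch)]"
  by (simp add: Mseq_def)

lemma length_M_ge2: "e \<in> S \<Longrightarrow> 2 \<le> length (M e)"
  by (cases "lab e") (simp_all add: length_M_Wr M_Rd)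

lemma M_first: "M e ! 0 = (Snd, Lch)"
  by (cases "lab e") (simp_all add: Mseq_def)

lemma M_last: "e \<in> S \<Longrightarrow> M e ! (length (M e) - 1) = (Rcv, Lch)"
  using length_M_ge2[of e] by (cases "lab e") (simp_all add: nth_M_Wr length_M_Wr M_Rd)

lemma M_Lch_iff:
  "e \<in> S \<Longrightarrow> k < length (M e) \<Longrightarrow> snd (M e ! k) = Lch \<longleftrightarrow> k = 0 \<or> k = length (M e) - 1"
  by (cases "lab e") (auto simp: nth_M_Wr length_M_Wr M_Rd nth_Cons split: nat.splits)

lemma M_Cch_iff:
  assumes "e \<in> S" "k < length (M e)"
  shows "snd (M e ! k) = Cch x j \<longleftrightarrow>
    (lab e = Wr x \<and> j \<le> mr x \<and> (1 \<le> j \<and> k = j \<or> card (RD e) < j \<and> k = mr x + j - card (RD e))) \<or>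
    (lab e = Rd x \<and> k = 1 \<and> j = idx e)"
  using assms card_readers_le_mreg[OF assms(1)]
  by (cases "lab e") (auto simp: nth_M_Wr length_M_Wr M_Rd nth_Cons split: nat.splits)

lemma OP_eq: "OP (e, k) = fst (M e ! k)"
  by (simp add: op'_def)

lemma CH_eq: "CH (e, k) = snd (M e ! k)"
  by (simp add: ch'_def)

lemma SS_iff: "(e, k) \<in> SS \<longleftrightarrow> e \<in> S \<and> k < len e"
  by (simp add: S'_def)

lemma RF_iff:
  "(u, v) \<in> RF \<longleftrightarrow>
     (\<exists>e. e \<in> S \<and> u = (e, 0) \<and> v = (e, len e - 1)) \<or>
     (\<exists>r x. r \<in> S \<and> lab r = Rd x \<and> u = (rf r, idx r) \<and> v = (r, 1)) \<or>
     (\<exists>w x j. w \<in> S \<and> lab w = Wr x \<and> card (RD w) < j \<and> j \<le> mr x \<and>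
        u = (w, j) \<and> v = (w, mr x + j - card (RD w)))"
proof -
  have "(\<exists>w r. w \<in> S \<and> is_wr (lab w) \<and> r \<in> RD w \<and> u = (w, idx r) \<and> v = (r, 1)) \<longleftrightarrow>
      (\<exists>r x. r \<in> S \<and> lab r = Rd x \<and> u = (rf r, idx r) \<and> v = (r, 1))"
    using rf_write by (auto simp: readers_iff elim!: is_wr.elims)
  then show ?thesis
    unfolding rf'_def by blast
qed

definition sc_order :: "'e list \<Rightarrow> bool" where
  "sc_order \<sigma> \<longleftrightarrow> distinct \<sigma> \<and> set \<sigma> = S \<and> (\<forall>(a, b)\<in>po. before \<sigma> a b) \<and>
     (\<forall>r\<in>S. \<not> is_wr (lab r) \<longrightarrow>
        before \<sigma> (rf r) r \<and>
        (\<forall>w\<in>S. is_wr (lab w) \<and> regof (lab w) = regof (lab r) \<and> w \<noteq> rf r \<longrightarrow>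
           \<not> (before \<sigma> (rf r) w \<and> before \<sigma> w r)))"

lemma seq_consistent_iff: "seq_consistent S po lab rf \<longleftrightarrow> (\<exists>\<sigma>. sc_order \<sigma>)"
  unfolding seq_consistent_def sc_order_def ..

lemma sc_order_read:
  assumes "sc_order \<sigma>" "r \<in> S" "lab r = Rd x"
  shows "before \<sigma> (rf r) r"
    and "w \<in> S \<Longrightarrow> lab w = Wr x \<Longrightarrow> w \<noteq> rf r \<Longrightarrow> \<not> (before \<sigma> (rf r) w \<and> before \<sigma> w r)"
  using assms by (auto simp: sc_order_def)

lemma sc_order_read_between:
  assumes sc: "sc_order \<sigma>" and r: "r \<in> S" "lab r = Rd x" and e: "e \<in> S" "lab e = Rd x"
    and between: "before \<sigma> (rf r) e" "before \<sigma> e r"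
  shows "rf e = rf r"
proof (rule ccontr)
  assume ne: "rf e \<noteq> rf r"
  have d: "distinct \<sigma>" and set: "set \<sigma> = S"
    using sc by (simp_all add: sc_order_def)
  have "rf e \<in> S" "lab (rf e) = Wr x" "rf r \<in> S" "lab (rf r) = Wr x"
    using rf_write r e by auto
  moreover have "before \<sigma> (rf e) e"
    using sc_order_read(1)[OF sc e] .
  ultimately consider "before \<sigma> (rf e) (rf r)" | "before \<sigma> (rf r) (rf e)"
    using before_total[of "rf e" \<sigma> "rf r"] ne set by blast
  then show False
  proof cases
    case 1
    then show False
      using sc_order_read(2)[OF sc e, of "rf r"] between ne[symmetric] \<open>rf r \<in> S\<close> \<open>lab (rf r) = Wr x\<close> by blast
  next
    case 2
    then show False
      using sc_order_read(2)[OF sc r, of "rf e"] before_trans[OF d \<open>before \<sigma> (rf e) e\<close> between(2)]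
        ne \<open>rf e \<in> S\<close> \<open>lab (rf e) = Wr x\<close> by blast
  qed
qed

lemma sc_order_before_expand:
  "sc_order \<sigma> \<Longrightarrow> before (expand len \<sigma>) (e1, k1) (e2, k2) \<longleftrightarrow>
     e1 \<in> S \<and> e2 \<in> S \<and> k1 < len e1 \<and> k2 < len e2 \<and>
     ((e1 = e2 \<and> k1 < k2) \<or> (e1 \<noteq> e2 \<and> before \<sigma> e1 e2))"
  by (simp add: sc_order_def before_expand)

lemma po_of_expand:
  assumes sc: "sc_order \<sigma>"
  shows "po_of TH (expand len \<sigma>) = PO"
proof -
  have d: "distinct \<sigma>" and po: "\<forall>(a, b)\<in>po. before \<sigma> a b"
    using sc by (simp_all add: sc_order_def)
  have key: "(e1 \<noteq> e2 \<and> before \<sigma> e1 e2 \<and> thr e1 = thr e2) \<longleftrightarrow> (e1, e2) \<in> po"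
    if "e1 \<in> S" "e2 \<in> S" for e1 e2
    using po_total_on_thread[of e1 e2] po_edgeD[of e1 e2] po_edgeD[of e2 e1] po before_asym[OF d] that by blast
  have "((e1, k1), (e2, k2)) \<in> po_of TH (expand len \<sigma>) \<longleftrightarrow> ((e1, k1), (e2, k2)) \<in> PO"
    for e1 k1 e2 k2
    using key[of e1 e2] po_edgeD[of e1 e2]
    by (auto simp: po_of_eq_before thr'_def po'_def S'_def sc_order_before_expand[OF sc])
  then show ?thesis
    by (intro set_eqI) (metis prod.collapse)
qed

lemma Lch_pair_adjacent:
  assumes sc: "sc_order \<sigma>" and e: "e \<in> S"
  shows "adjacent_in (\<lambda>v. CH v = Lch) (expand len \<sigma>) (e, 0) (e, len e - 1)"
proof -
  have d: "distinct \<sigma>" using sc by (simp add: sc_order_def)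
  have "\<not> (before (expand len \<sigma>) (e, 0) v \<and> before (expand len \<sigma>) v (e, len e - 1))"
    if "CH v = Lch" for v
    using between_in_expand_block[OF d, of len e 0 v "len e - 1"] that M_Lch_iff[OF e] by (auto simp: CH_eq)
  then show ?thesis
    using e length_M_ge2[OF e] M_first M_last[OF e]
    by (auto simp: adjacent_in_def CH_eq sc_order_before_expand[OF sc])
qed

lemma Cch_pair_adjacent:
  assumes sc: "sc_order \<sigma>" and w: "w \<in> S" "lab w = Wr x" and j: "card (RD w) < j" "j \<le> mr x"
  shows "adjacent_in (\<lambda>v. CH v = Cch x j) (expand len \<sigma>) (w, j) (w, mr x + j - card (RD w))"
proof -
  have d: "distinct \<sigma>" using sc by (simp add: sc_order_def)
  have "\<not> (before (expand len \<sigma>) (w, j) v \<and> before (expand len \<sigma>) v (w, mr x + j - card (RD w)))"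
    if v: "CH v = Cch x j" for v
  proof
    assume "before (expand len \<sigma>) (w, j) v \<and> before (expand len \<sigma>) v (w, mr x + j - card (RD w))"
    then obtain k where "v = (w, k)" "j < k" "k < mr x + j - card (RD w)"
      using between_in_expand_block[OF d] by blast
    moreover have "k < len w"
      using calculation length_M_Wr[OF w] j by simp
    ultimately show False
      using v M_Cch_iff[OF w(1)] j by (auto simp: CH_eq)
  qed
  then show ?thesis
    using w j length_M_Wr[OF w] M_Cch_iff[OF w(1)]
    by (auto simp: adjacent_in_def CH_eq sc_order_before_expand[OF sc])
qed

lemma reader_pair_adjacent:
  assumes sc: "sc_order \<sigma>" and r: "r \<in> S" "lab r = Rd x"
  shows "adjacent_in (\<lambda>v. CH v = Cch x (idx r)) (expand len \<sigma>) (rf r, idx r) (r, 1)"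
proof -
  define w where "w = rf r"
  have w: "w \<in> S" "lab w = Wr x" and j: "1 \<le> idx r" "idx r \<le> card (RD w)"
    using rf_write[OF r] idx_range[OF r] by (simp_all add: w_def)
  have jm: "idx r \<le> mr x"
    using j card_readers_le_mreg[OF w] by simp
  have jlen: "idx r < len w"
    using jm length_M_Wr[OF w] by simp
  have wr: "before \<sigma> w r" "w \<noteq> r"
    using sc_order_read(1)[OF sc r] r w by (auto simp: w_def)
  have no_between: False
    if v: "CH (e, k) = Cch x (idx r)" and b: "before (expand len \<sigma>) (w, idx r) (e, k)"
      "before (expand len \<sigma>) (e, k) (r, 1)" for e k
  proof -
    have e: "e \<in> S" "k < len e"
      using b by (auto simp: sc_order_before_expand[OF sc])
    have ch: "lab e = Wr x \<and> (1 \<le> idx r \<and> k = idx r \<or> card (RD e) < idx r \<and> k = mr x + idx r - card (RD e))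
        \<or> lab e = Rd x \<and> k = 1 \<and> idx r = idx e"
      using v M_Cch_iff[OF e] by (auto simp: CH_eq)
    have "e \<noteq> r"
      using b(2) ch by (auto simp: sc_order_before_expand[OF sc])
    moreover have "e \<noteq> w \<Longrightarrow> before \<sigma> w e \<and> before \<sigma> e r"
      using b calculation by (auto simp: sc_order_before_expand[OF sc])
    moreover have "e \<noteq> w"
      \<comment> \<open>the receives of \<open>w\<close> only use channel indices above \<open>card (RD w)\<close>\<close>
      using b(1) ch j by (auto simp: sc_order_before_expand[OF sc])
    \<comment> \<open>SC excludes a write on \<open>x\<close> between \<open>w\<close> and \<open>r\<close>; a read of \<open>x\<close> there reads from
      \<open>w\<close>, hence is \<open>r\<close> itself, as \<open>idx\<close> is injective on the readers of \<open>w\<close>\<close>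
    ultimately show False
      using ch sc_order_read(2)[OF sc r e(1)] sc_order_read_between[OF sc r e(1)] idx_inj[OF r]
        readers_iff e(1) by (auto simp: w_def)
  qed
  have "CH (w, idx r) = Cch x (idx r)" "CH (r, 1) = Cch x (idx r)"
    using j jm M_Cch_iff[OF w(1) jlen] w(2) M_Rd[OF r(2)] by (simp_all add: CH_eq)
  moreover have "before (expand len \<sigma>) (w, idx r) (r, 1)"
    using w r jlen wr length_M_ge2[OF r(1)] by (simp add: sc_order_before_expand[OF sc])
  ultimately show ?thesis
    unfolding adjacent_in_def w_def[symmetric] using no_between by (metis prod.exhaust)
qed

lemma RF_pair_adjacent:
  assumes sc: "sc_order \<sigma>" and p: "(s, r) \<in> RF"
  shows "OP s = Snd \<and> OP r = Rcv \<and> adjacent_in (\<lambda>v. CH v = CH s) (expand len \<sigma>) s r"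
  using p unfolding RF_iff
proof (elim disjE exE conjE)
  fix e
  assume "e \<in> S" "s = (e, 0)" "r = (e, len e - 1)"
  then show ?thesis
    using Lch_pair_adjacent[OF sc] M_first M_last by (simp add: OP_eq CH_eq)
next
  fix r' x
  assume r': "r' \<in> S" "lab r' = Rd x" and sr: "s = (rf r', idx r')" "r = (r', 1)"
  have "idx r' \<le> mr x" "1 \<le> idx r'"
    using idx_range[OF r'] card_readers_le_mreg rf_write[OF r'] by (auto intro: order_trans)
  then show ?thesis
    using reader_pair_adjacent[OF sc r'] rf_write[OF r'] length_M_Wr[of "rf r'" x]
      nth_M_Wr[of "rf r'" x "idx r'"] M_Rd[OF r'(2)] sr by (simp add: OP_eq CH_eq)
next
  fix w x j
  assume w: "w \<in> S" "lab w = Wr x" and j: "card (RD w) < j" "j \<le> mr x"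
    and sr: "s = (w, j)" "r = (w, mr x + j - card (RD w))"
  moreover have "mr x < mr x + j - card (RD w)" "mr x + j - card (RD w) \<le> mr x + (mr x - card (RD w))"
    using j by arith+
  ultimately show ?thesis
    using Cch_pair_adjacent[OF sc w j] length_M_Wr[OF w] nth_M_Wr[OF w, of j]
      nth_M_Wr[OF w, of "mr x + j - card (RD w)"] by (simp add: OP_eq CH_eq)
qed

lemma Snd_is_RF_source:
  assumes v: "(e, k) \<in> SS" "OP (e, k) = Snd"
  shows "\<exists>r. ((e, k), r) \<in> RF"
proof (cases "lab e")
  case (Wr x)
  have e: "e \<in> S" "k < len e"
    using v by (simp_all add: SS_iff)
  then consider "k = 0" | "1 \<le> k" "k \<le> card (RD e)" | "card (RD e) < k" "k \<le> mr x"
    using v nth_M_Wr[OF e(1) Wr e(2)] by (fastforce simp: OP_eq split: if_splits)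
  then show ?thesis
  proof cases
    case 2
    then obtain r where "r \<in> RD e" "idx r = k"
      using idx_surj[OF e(1) Wr] by blast
    then have "r \<in> S" "lab r = Rd (regof (lab r))" "rf r = e" "idx r = k"
      by (auto simp: readers_iff elim: is_wr.elims)
    then show ?thesis
      unfolding RF_iff by metis
  qed (use e Wr in \<open>unfold RF_iff, blast+\<close>)
next
  case (Rd x)
  then show ?thesis
    using v M_Rd[OF Rd] by (auto simp: RF_iff SS_iff OP_eq less_Suc_eq)
qed

lemma Rcv_is_RF_target:
  assumes v: "(e, k) \<in> SS" "OP (e, k) = Rcv"
  shows "\<exists>s. (s, (e, k)) \<in> RF"
proof (cases "lab e")
  case (Wr x)
  have e: "e \<in> S" "k < len e"
    using v by (simp_all add: SS_iff)
  then have "k = len e - 1 \<or> (\<exists>j. card (RD e) < j \<and> j \<le> mr x \<and> k = mr x + j - card (RD e))"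
    using v nth_M_Wr[OF e(1) Wr e(2)] length_M_Wr[OF e(1) Wr] card_readers_le_mreg[OF e(1) Wr]
    by (auto simp: OP_eq split: if_splits intro!: exI[of _ "k - mr x + card (RD e)"])
  then show ?thesis
    unfolding RF_iff using e Wr by blast
next
  case (Rd x)
  then show ?thesis
    using v M_Rd[OF Rd] by (auto simp: RF_iff SS_iff OP_eq less_Suc_eq)
qed

lemma vch_consistent_if_sc_order:
  assumes sc: "sc_order \<sigma>"
  shows "vch_consistent SS PO (\<lambda>_. 1) TH OP CH RF"
proof -
  have d: "distinct (expand len \<sigma>)" and set: "set (expand len \<sigma>) = SS"
    using sc distinct_expand by (auto simp: sc_order_def set_expand S'_def)
  have matched: "\<forall>(s, r) \<in> RF. OP s = Snd \<and> OP r = Rcv \<and> adjacent_in (\<lambda>v. CH v = CH s) (expand len \<sigma>) s r"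
    using RF_pair_adjacent[OF sc] by blast
  have sends: "\<forall>s \<in> set (expand len \<sigma>). OP s = Snd \<longrightarrow> (\<exists>r. (s, r) \<in> RF)"
    using Snd_is_RF_source set by auto
  have "well_formed (\<lambda>_. 1) TH OP CH (expand len \<sigma>)"
    using Rcv_is_RF_target set by (intro well_formed_cap1_if_matching[OF d matched sends]) auto
  moreover from this have "rf_of OP CH (expand len \<sigma>) = RF"
    by (rule rf_of_cap1_eq_if_matching[OF d _ matched sends])
  ultimately show ?thesis
    unfolding vch_consistent_def using d set po_of_expand[OF sc] by blast
qed

definition vch_execution :: "('e \<times> nat) list \<Rightarrow> bool" where
  "vch_execution \<tau> \<longleftrightarrow> distinct \<tau> \<and> set \<tau> = SS \<and> po_of TH \<tau> = PO \<and>
     well_formed (\<lambda>_. 1) TH OP CH \<tau> \<and> rf_of OP CH \<tau> = RF"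

lemma vch_consistent_iff: "vch_consistent SS PO (\<lambda>_. 1) TH OP CH RF \<longleftrightarrow> (\<exists>\<tau>. vch_execution \<tau>)"
  unfolding vch_consistent_def vch_execution_def ..

lemma vch_execution_block_order:
  assumes "vch_execution \<tau>" "e \<in> S" "k1 < k2" "k2 < len e"
  shows "before \<tau> (e, k1) (e, k2)"
proof -
  have "((e, k1), (e, k2)) \<in> PO"
    using assms(2-) by (simp add: po'_def S'_def)
  moreover have "po_of TH \<tau> = PO"
    using assms(1) by (simp add: vch_execution_def)
  ultimately show ?thesis
    unfolding po_of_eq_before by (auto simp: thr'_def)
qed

lemma vch_execution_RF_adjacent:
  assumes "vch_execution \<tau>" "(s, r) \<in> RF"
  shows "adjacent_in (\<lambda>v. CH v = CH s) \<tau> s r"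
proof -
  have "distinct \<tau>" "well_formed (\<lambda>_. 1) TH OP CH \<tau>" "(s, r) \<in> rf_of OP CH \<tau>"
    using assms by (simp_all add: vch_execution_def)
  then show ?thesis
    by (simp add: rf_of_cap1_iff)
qed

text \<open>The \<open>\<ell>\<close>-pair of \<open>M(e\<^sub>1)\<close> admits no \<open>\<ell>\<close>-event in between, so \<open>(e\<^sub>2, 0)\<close> comes after the
  whole block of \<open>e\<^sub>1\<close>.\<close>

lemma vch_execution_blocks_contiguous:
  assumes ex: "vch_execution \<tau>" and e: "e1 \<in> S" "e2 \<in> S" "e1 \<noteq> e2"
    and first: "before \<tau> (e1, 0) (e2, 0)" and k: "k1 < len e1" "k2 < len e2"
  shows "before \<tau> (e1, k1) (e2, k2)"
proof -
  have d: "distinct \<tau>" and set: "set \<tau> = SS"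
    using ex by (simp_all add: vch_execution_def)
  define l where "l = len e1 - 1"
  have "adjacent_in (\<lambda>v. CH v = Lch) \<tau> (e1, 0) (e1, l)"
    using vch_execution_RF_adjacent[OF ex, of "(e1, 0)" "(e1, l)"] e(1) M_first
    by (simp add: RF_iff CH_eq l_def)
  then have "\<not> before \<tau> (e2, 0) (e1, l)"
    using first M_first by (simp add: adjacent_in_def CH_eq)
  moreover have "(e1, l) \<in> set \<tau>" "(e2, 0) \<in> set \<tau>"
    using set e length_M_ge2[OF e(1)] length_M_ge2[OF e(2)] by (auto simp: SS_iff l_def)
  ultimately have last_first: "before \<tau> (e1, l) (e2, 0)"
    using before_total[of "(e1, l)" \<tau> "(e2, 0)"] e(3) by simp
  have "k1 = l \<or> before \<tau> (e1, k1) (e1, l)"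
    using vch_execution_block_order[OF ex e(1), of k1 l] k length_M_ge2[OF e(1)]
    by (cases "k1 < l") (auto simp: l_def)
  then have "before \<tau> (e1, k1) (e2, 0)"
    using last_first before_trans[OF d] by blast
  moreover have "k2 = 0 \<or> before \<tau> (e2, 0) (e2, k2)"
    using vch_execution_block_order[OF ex e(2), of 0 k2] k by auto
  ultimately show ?thesis
    using before_trans[OF d] by blast
qed

lemma vch_execution_before_iff:
  assumes ex: "vch_execution \<tau>" and e: "e1 \<in> S" "e2 \<in> S" "e1 \<noteq> e2"
    and k: "k1 < len e1" "k2 < len e2"
  shows "before \<tau> (e1, k1) (e2, k2) \<longleftrightarrow> before (first_events \<tau>) e1 e2"
proof -
  have d: "distinct \<tau>" and set: "set \<tau> = SS"
    using ex by (simp_all add: vch_execution_def)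
  have "(e1, 0) \<in> set \<tau>" "(e2, 0) \<in> set \<tau>"
    using set e length_M_ge2[OF e(1)] length_M_ge2[OF e(2)] by (auto simp: SS_iff)
  then consider "before \<tau> (e1, 0) (e2, 0)" | "before \<tau> (e2, 0) (e1, 0)"
    using before_total[of "(e1, 0)" \<tau> "(e2, 0)"] e(3) by auto
  then show ?thesis
  proof cases
    case 1
    then show ?thesis
      using vch_execution_blocks_contiguous[OF ex e 1 k] by (simp add: before_first_events)
  next
    case 2
    then show ?thesis
      using vch_execution_blocks_contiguous[OF ex e(2,1) e(3)[symmetric] 2 k(2,1)] before_asym[OF d]
      by (auto simp: before_first_events)
  qed
qed

lemma first_events_read:
  assumes ex: "vch_execution \<tau>" and r: "r \<in> S" "lab r = Rd x"
  shows "before (first_events \<tau>) (rf r) r"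
    and "w' \<in> S \<Longrightarrow> lab w' = Wr x \<Longrightarrow> w' \<noteq> rf r \<Longrightarrow>
      \<not> (before (first_events \<tau>) (rf r) w' \<and> before (first_events \<tau>) w' r)"
proof -
  define w where "w = rf r"
  have w: "w \<in> S" "lab w = Wr x" and j: "1 \<le> idx r" "idx r \<le> card (RD w)"
    using rf_write[OF r] idx_range[OF r] by (simp_all add: w_def)
  have jm: "idx r \<le> mr x"
    using j card_readers_le_mreg[OF w] by simp
  have on_channel: "CH (w', idx r) = Cch x (idx r)" "idx r < len w'"
    if "w' \<in> S" "lab w' = Wr x" for w'
    using M_Cch_iff[OF that(1)] j jm length_M_Wr[OF that] that(2) by (auto simp: CH_eq)
  have "adjacent_in (\<lambda>v. CH v = Cch x (idx r)) \<tau> (w, idx r) (r, 1)"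
    using vch_execution_RF_adjacent[OF ex, of "(w, idx r)" "(r, 1)"] r on_channel[OF w]
    unfolding RF_iff w_def by auto
  then have adj: "before \<tau> (w, idx r) (r, 1)"
    "\<And>v. CH v = Cch x (idx r) \<Longrightarrow> \<not> (before \<tau> (w, idx r) v \<and> before \<tau> v (r, 1))"
    unfolding adjacent_in_def by blast+
  have rw: "w \<noteq> r" "1 < len r"
    using w r length_M_ge2[OF r(1)] by auto
  show "before (first_events \<tau>) (rf r) r"
    using adj(1) vch_execution_before_iff[OF ex w(1) r(1) rw(1) on_channel(2)[OF w] rw(2)]
    by (simp add: w_def)
  assume w': "w' \<in> S" "lab w' = Wr x" "w' \<noteq> rf r"
  show "\<not> (before (first_events \<tau>) (rf r) w' \<and> before (first_events \<tau>) w' r)"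
  proof
    assume "before (first_events \<tau>) (rf r) w' \<and> before (first_events \<tau>) w' r"
    moreover have "w' \<noteq> r"
      using w'(2) r(2) by auto
    ultimately have "before \<tau> (w, idx r) (w', idx r)" "before \<tau> (w', idx r) (r, 1)"
      using vch_execution_before_iff[OF ex w(1) w'(1)] vch_execution_before_iff[OF ex w'(1) r(1)]
        on_channel(2)[OF w] on_channel(2)[OF w'(1,2)] rw(2) w'(3) by (auto simp: w_def)
    then show False
      using adj(2)[OF on_channel(1)[OF w'(1,2)]] by blast
  qed
qed

lemma sc_order_first_events:
  assumes ex: "vch_execution \<tau>"
  shows "sc_order (first_events \<tau>)"
proof -
  have "distinct \<tau>" and set: "set \<tau> = SS"
    using ex by (simp_all add: vch_execution_def)
  from this(1) have "distinct (first_events \<tau>)"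
    by (rule distinct_first_events)
  moreover have "set (first_events \<tau>) = S"
    using set length_M_ge2 by (force simp: set_first_events SS_iff)
  moreover have "before (first_events \<tau>) a b" if "(a, b) \<in> po" for a b
  proof -
    have "((a, 0), (b, 0)) \<in> PO"
      using that po_edgeD[OF that] length_M_ge2 by (force simp: po'_def S'_def)
    then show ?thesis
      using ex by (auto simp: vch_execution_def po_of_eq_before before_first_events)
  qed
  ultimately show ?thesis
    using first_events_read[OF ex] unfolding sc_order_def
    by (auto elim!: is_wr.elims)
qed
end

theorem mainTheorem13:
  fixes S :: "'e set" and po :: "('e \<times> 'e) set" and thr :: "'e \<Rightarrow> 't"
    and lab :: "'e \<Rightarrow> 'x acc" and rf :: "'e \<Rightarrow> 'e" and idx :: "'e \<Rightarrow> nat"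
  assumes "vsc_instance S po thr lab rf"
    and "valid_enum S lab rf idx"
  shows "seq_consistent S po lab rf \<longleftrightarrow>
         vch_consistent (S' S lab rf idx) (po' S po lab rf idx) (\<lambda>_ :: 'x chan. 1 :: nat)
           (thr' thr) (op' S lab rf idx) (ch' S lab rf idx) (rf' S lab rf idx)"
proof -
  interpret vsc_reduction S po thr lab rf idx
    using assms by unfold_locales
  show ?thesis
    using vch_consistent_if_sc_order sc_order_first_events
    unfolding seq_consistent_iff vch_consistent_iff by blast
qed

end
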